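(* There exist a financial system $S$ in the base model (all contracts of the same priority) and distinct banks $u,v_1,v_2$ with $e_{v_1},e_{v_2}\ge 1$ such that the following holds. For $(s_1,s_2)\in\{C,D\}^2$ let $S_{s_1s_2}$ be the system obtained from $S$ by, for each $i$ with $s_i=C$, decreasing $e_{v_i}$ by $1$ and increasing $e_u$ by $1$ (bank $v_i$ donates one unit to $u$). Then each $S_{s_1s_2}$ has exactly one solution, and the payoffs $(q_{v_1},q_{v_2})$ of $v_1,v_2$ at that solution, measured relative to the original external assets (i.e. the payoff of $v_i$ in $S_{s_1s_2}$ minus $e_{v_i}$ of $S$ plus the external assets $v_i$ still holds, equivalently its net gain from contracts minus the donated amount), are $(2,2)$ for $CC$, $(0,0)$ for $DD$, $(2,3)$ for $CD$, and $(3,2)$ for $DC$. In particular, in the two-player game where $v_i$ chooses $s_i$, the pure Nash equilibria are exactly $CD$ and $DC$.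
   Context: A financial system with payment priorities consists of: a finite set $V$ of banks; external assets $e_v\ge 0$ for each $v\in V$; a number $P\ge 1$ of priority levels; and a finite set of contracts, each of which is either a debt contract from a debtor $u$ to a creditor $v\neq u$ with weight $c>0$, or a credit default swap (CDS) from a debtor $u$ to a creditor $v\neq u$ in reference to a bank $w\notin\{u,v\}$ (the reference entity) with weight $c>0$. Every contract has a priority in $\{1,\dots,P\}$ (1 is the highest priority). It is assumed that every bank that is the reference entity of some CDS is the debtor of at least one debt contract of positive weight. Given a recovery rate vector $r\in[0,1]^V$: the liability of a contract $k$ is $l_k(r)=c$ if $k$ is a debt of weight $c$, and $l_k(r)=c\,(1-r_w)$ if $k$ is a CDS of weight $c$ in reference to $w$. For a bank $v$, $l_v(r)$ is the sum of the liabilities of the contracts with debtor $v$; $l_v^{(\rho)}(r)$ is the sum of the liabilities of contracts with debtor $v$ and priority $\rho$; and $l_v^{(\le\rho)}(r)=\sum_{i=1}^{\rho}l_v^{(i)}(r)$ (with $l_v^{(\le 0)}=0$). The payment on a contract $k$ with debtor $v$ and priority $\rho$ is $p_k(r)=l_k(r)\cdot\min\{1,\max\{0,(r_v l_v(r)-l_v^{(\le\rho-1)}(r))/l_v^{(\rho)}(r)\}\}$ (and $p_k(r)=0$ if $l_v^{(\rho)}(r)=0$). The assets of $v$ are $a_v(r)=e_v+\sum_k p_k(r)$, summing over contracts $k$ with creditor $v$. A vector $r\in[0,1]^V$ is a solution (clearing vector) if for every $v\in V$: $r_v=1$ when $a_v(r)\ge l_v(r)$, and $r_v=a_v(r)/l_v(r)$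 when $a_v(r)<l_v(r)$. The payoff of $v$ is $q_v(r)=\max\{a_v(r)-l_v(r),0\}$. When $P=1$, payments reduce to $p_k(r)=r_v\,l_k(r)$ (principle of proportionality); this is called the base model. In this statement the acting banks $v_1,v_2$ have no outgoing contracts, and the game payoff of $v_i$ in $S_{s_1s_2}$ is defined as $q_{v_i}$ computed in $S_{s_1s_2}$ minus the external assets $e_{v_i}$ that $v_i$ had in $S$ plus... more simply: the total incoming payments of $v_i$ at the solution of $S_{s_1s_2}$ minus the amount ($0$ or $1$) that $v_i$ donated. *)

theory Defs
  imports Main "HOL.Real"
begin

text \<open>A contract is either a debt contract
  Debt u v c rho (debtor u, creditor v, weight c, priority rho) or a CDS
  CDS u v w c rho (debtor u, creditor v, reference entity w, weight c, priority rho).\<close>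

datatype contract =
    Debt nat nat real nat
  | CDS nat nat nat real nat

fun debtor :: "contract \<Rightarrow> nat" where
  "debtor (Debt u v c p) = u" | "debtor (CDS u v w c p) = u"

fun creditor :: "contract \<Rightarrow> nat" where
  "creditor (Debt u v c p) = v" | "creditor (CDS u v w c p) = v"

fun weight :: "contract \<Rightarrow> real" where
  "weight (Debt u v c p) = c" | "weight (CDS u v w c p) = c"

fun prio :: "contract \<Rightarrow> nat" where
  "prio (Debt u v c p) = p" | "prio (CDS u v w c p) = p"

record fsys =
  banks :: "nat set"
  ext :: "nat \<Rightarrow> real"
  nprio :: nat
  contracts :: "contract set"

definition wf_system :: "fsys \<Rightarrow> bool" where
  "wf_system S \<longleftrightarrow>
     finite (banks S) \<and> finite (contracts S) \<and> nprio S \<ge> 1 \<and>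
     (\<forall>v\<in>banks S. ext S v \<ge> 0) \<and>
     (\<forall>k\<in>contracts S. debtor k \<in> banks S \<and> creditor k \<in> banks S \<and>
        debtor k \<noteq> creditor k \<and> weight k > 0 \<and> 1 \<le> prio k \<and> prio k \<le> nprio S) \<and>
     (\<forall>u v w c p. CDS u v w c p \<in> contracts S \<longrightarrow>
        w \<in> banks S \<and> w \<noteq> u \<and> w \<noteq> v \<and>
        (\<exists>k\<in>contracts S. (\<exists>v' c' p'. k = Debt w v' c' p' \<and> c' > 0)))"

definition base_model :: "fsys \<Rightarrow> bool" where
  "base_model S \<longleftrightarrow> nprio S = 1"

fun liab :: "contract \<Rightarrow> (nat \<Rightarrow> real) \<Rightarrow> real" where
  "liab (Debt u v c p) r = c"
| "liab (CDS u v w c p) r = c * (1 - r w)"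

definition lv :: "fsys \<Rightarrow> (nat \<Rightarrow> real) \<Rightarrow> nat \<Rightarrow> real" where
  "lv S r v = (\<Sum>k\<in>{k\<in>contracts S. debtor k = v}. liab k r)"

definition lvp :: "fsys \<Rightarrow> (nat \<Rightarrow> real) \<Rightarrow> nat \<Rightarrow> nat \<Rightarrow> real" where
  "lvp S r v \<rho> = (\<Sum>k\<in>{k\<in>contracts S. debtor k = v \<and> prio k = \<rho>}. liab k r)"

definition lvle :: "fsys \<Rightarrow> (nat \<Rightarrow> real) \<Rightarrow> nat \<Rightarrow> nat \<Rightarrow> real" where
  "lvle S r v \<rho> = (\<Sum>i\<in>{1..\<rho>}. lvp S r v i)"

definition pay :: "fsys \<Rightarrow> (nat \<Rightarrow> real) \<Rightarrow> contract \<Rightarrow> real" where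
  "pay S r k =
     (let v = debtor k; \<rho> = prio k in
      if lvp S r v \<rho> = 0 then 0
      else liab k r * min 1 (max 0 ((r v * lv S r v - lvle S r v (\<rho> - 1)) / lvp S r v \<rho>)))"

definition incoming :: "fsys \<Rightarrow> (nat \<Rightarrow> real) \<Rightarrow> nat \<Rightarrow> real" where
  "incoming S r v = (\<Sum>k\<in>{k\<in>contracts S. creditor k = v}. pay S r k)"

definition assets :: "fsys \<Rightarrow> (nat \<Rightarrow> real) \<Rightarrow> nat \<Rightarrow> real" where
  "assets S r v = ext S v + incoming S r v"

definition payoff :: "fsys \<Rightarrow> (nat \<Rightarrow> real) \<Rightarrow> nat \<Rightarrow> real" where
  "payoff S r v = max (assets S r v - lv S r v) 0"

text \<open>A clearing vector r in [0,1]^V; as a function on nat it is fixed to 0 outside V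
  so that uniqueness is meaningful.\<close>
definition is_solution :: "fsys \<Rightarrow> (nat \<Rightarrow> real) \<Rightarrow> bool" where
  "is_solution S r \<longleftrightarrow>
     (\<forall>v. v \<notin> banks S \<longrightarrow> r v = 0) \<and>
     (\<forall>v\<in>banks S. 0 \<le> r v \<and> r v \<le> 1 \<and>
        (assets S r v \<ge> lv S r v \<longrightarrow> r v = 1) \<and>
        (assets S r v < lv S r v \<longrightarrow> r v = assets S r v / lv S r v))"

datatype strat = C | D

definition donated :: "strat \<Rightarrow> real" where
  "donated s = (if s = C then 1 else 0)"

definition donate :: "nat \<Rightarrow> nat \<Rightarrow> fsys \<Rightarrow> fsys" where
  "donate u v S = S\<lparr>ext := (ext S)(v := ext S v - 1, u := ext S u + 1)\<rparr>"

definition game_sys :: "fsys \<Rightarrow> nat \<Rightarrow> nat \<Rightarrow> nat \<Rightarrow> strat \<Rightarrow> strat \<Rightarrow> fsys" where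
  "game_sys S u v1 v2 s1 s2 =
     (let S1 = (if s1 = C then donate u v1 S else S) in
      if s2 = C then donate u v2 S1 else S1)"

definition game_payoff :: "fsys \<Rightarrow> nat \<Rightarrow> nat \<Rightarrow> nat \<Rightarrow> strat \<Rightarrow> strat \<Rightarrow> real \<times> real" where
  "game_payoff S u v1 v2 s1 s2 =
     (let S' = game_sys S u v1 v2 s1 s2; r = (THE r. is_solution S' r) in
      (incoming S' r v1 - donated s1, incoming S' r v2 - donated s2))"

definition pure_nash :: "(strat \<Rightarrow> strat \<Rightarrow> real \<times> real) \<Rightarrow> strat \<Rightarrow> strat \<Rightarrow> bool" where
  "pure_nash g s1 s2 \<longleftrightarrow>
     (\<forall>t. fst (g t s2) \<le> fst (g s1 s2)) \<and> (\<forall>t. snd (g s1 t) \<le> snd (g s1 s2))"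

end

theory Submission imports Defs begin

text \<open>Bank 0 owes 1 to bank 6, and bank 4, whose only funding is a CDS on bank 0, also owes 1
  to bank 6; the players 1 and 2 each hold a CDS of weight 3 on bank 4. If bank 0 receives at
  least one unit it is solvent, the CDS on it pays nothing, bank 4 defaults completely and both
  players collect 3. Without a donation bank 0 defaults completely, bank 4 is paid in full and
  the players get nothing. So one donation benefits both players, and whoever donates pays 1 for
  it: a game of chicken.\<close>

lemma lvp_base_model:
  assumes "wf_system S" "base_model S"
  shows "lvp S r v 1 = lv S r v"
proof -
  have "prio k = 1" if "k \<in> contracts S" for k
    using assms that unfolding wf_system_def base_model_def by fastforce
  then show ?thesis
    unfolding lvp_def lv_def by (intro sum.cong) auto
qed

lemma liab_nonneg:
  assumes "0 < weight k" "\<And>w. r w \<le> 1"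
  shows "0 \<le> liab k r"
  using assms by (cases k) auto

text \<open>The range condition on r makes liabilities nonnegative; it is needed for debtors whose
  liabilities sum to 0.\<close>
lemma pay_base_model:
  assumes S: "wf_system S" "base_model S" and k: "k \<in> contracts S"
    and r: "\<And>w. 0 \<le> r w" "\<And>w. r w \<le> 1"
  shows "pay S r k = liab k r * r (debtor k)"
proof -
  have prio: "prio k = 1"
    using S k unfolding wf_system_def base_model_def by fastforce
  have lvp: "lvp S r (debtor k) 1 = lv S r (debtor k)"
    using lvp_base_model[OF S] .
  show ?thesis
  proof (cases "lv S r (debtor k) = 0")
    case True
    have "finite (contracts S)" "\<forall>k\<in>contracts S. 0 < weight k"
      using S(1) unfolding wf_system_def by auto
    then have "\<forall>k'\<in>{k' \<in> contracts S. debtor k' = debtor k}. liab k' r = 0"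
      using True r(2) liab_nonneg unfolding lv_def
      by (subst sum_nonneg_eq_0_iff[symmetric]) auto
    with k True show ?thesis
      unfolding pay_def Let_def prio lvp by simp
  next
    case False
    with r show ?thesis
      unfolding pay_def Let_def prio lvp by (simp add: lvle_def)
  qed
qed

lemma is_solution_iff:
  "is_solution S r \<longleftrightarrow> (\<forall>v. v \<notin> banks S \<longrightarrow> r v = 0) \<and>
     (\<forall>v\<in>banks S. 0 \<le> r v \<and> r v \<le> 1 \<and>
        r v = (if lv S r v \<le> assets S r v then 1 else assets S r v / lv S r v))"
  unfolding is_solution_def by (auto simp: not_le)

lemma is_solution_range:
  assumes "is_solution S r"
  shows "0 \<le> r w" "r w \<le> 1"
  using assms unfolding is_solution_def by (cases "w \<in> banks S"; auto)+

lemma pure_nash_chicken_game: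
  assumes "g C C = (2, 2)" "g D D = (0, 0)" "g C D = (2, 3)" "g D C = (3, 2)"
  shows "{(s1, s2). pure_nash g s1 s2} = {(C, D), (D, C)}"
proof -
  have all_strat: "(\<forall>t. P t) \<longleftrightarrow> P C \<and> P D" for P
    by (metis strat.exhaust)
  have "pure_nash g s1 s2 \<longleftrightarrow> (s1, s2) \<in> {(C, D), (D, C)}" for s1 s2
    unfolding pure_nash_def all_strat using assms by (cases s1; cases s2) simp_all
  then show ?thesis by auto
qed

definition chicken_contracts :: "contract set" where
  "chicken_contracts =
     {Debt 0 6 1 1, CDS 3 4 0 1 1, Debt 4 6 1 1, CDS 5 1 4 3 1, CDS 5 2 4 3 1}"

definition chicken_system :: fsys where
  "chicken_system =
     \<lparr>banks = {0..6}, ext = (\<lambda>v. if v \<in> {1, 2, 3} then 1 else if v = 5 then 6 else 0),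
      nprio = 1, contracts = chicken_contracts\<rparr>"

lemma wf_chicken_system: "wf_system chicken_system"
  unfolding wf_system_def chicken_system_def by (auto simp: chicken_contracts_def)

lemma bank_0_6_cases:
  fixes v :: nat
  assumes "v \<in> {0..6}"
  obtains "v = 0" | "v = 1" | "v = 2" | "v = 3" | "v = 4" | "v = 5" | "v = 6"
  using assms[simplified] by linarith

text \<open>The systems reached from the chicken system by donations, e being the amount donated
  to bank 0.\<close>
locale chicken_variant =
  fixes T :: fsys and e :: real
  assumes contracts: "contracts T = chicken_contracts" and nprio: "nprio T = 1"
    and banks: "banks T = {0..6}"
    and ext0: "ext T 0 = e" and donation: "e = 0 \<or> e \<ge> 1"
    and ext3: "ext T 3 = 1" and ext4: "ext T 4 = 0" and ext5: "ext T 5 = 6"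
    and ext_nonneg: "ext T 1 \<ge> 0" "ext T 2 \<ge> 0" "ext T 6 \<ge> 0"
begin

lemma wf: "wf_system T"
proof -
  have "0 \<le> ext T v" if "v \<in> {0..6}" for v
    using that donation ext_nonneg by (cases rule: bank_0_6_cases) (auto simp: ext0 ext3 ext4 ext5)
  then show ?thesis
    unfolding wf_system_def contracts nprio banks by (auto simp: chicken_contracts_def)
qed

lemma lv_eq:
  "lv T r v = (if v = 0 then 1 else if v = 3 then 1 - r 0 else if v = 4 then 1
     else if v = 5 then 6 * (1 - r 4) else 0)"
  unfolding lv_def contracts
  by (subst sum.inter_filter) (auto simp: chicken_contracts_def)

lemma incoming_eq:
  assumes "\<And>w. 0 \<le> r w" "\<And>w. r w \<le> 1"
  shows "incoming T r v = (if v = 4 then (1 - r 0) * r 3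
     else if v = 1 \<or> v = 2 then 3 * (1 - r 4) * r 5
     else if v = 6 then r 0 + r 4 else 0)"
proof -
  have "base_model T" using nprio by (simp add: base_model_def)
  note pay = pay_base_model[OF wf this _ assms, unfolded contracts]
  show ?thesis
    unfolding incoming_def contracts
    by (subst sum.inter_filter) (auto simp: chicken_contracts_def pay)
qed

definition u_recovery :: real where
  "u_recovery = (if e \<ge> 1 then 1 else 0)"

definition clearing_vector :: "nat \<Rightarrow> real" where
  "clearing_vector v = (if v \<in> {1, 2, 3, 5, 6} then 1 else if v = 0 then u_recovery
     else if v = 4 then 1 - u_recovery else 0)"

lemma clearing_vector_unique:
  assumes sol: "is_solution T r"
  shows "r = clearing_vector"
proof -
  note range = is_solution_range[OF sol]
  have rec: "r v = (if lv T r v \<le> ext T v + incoming T r v then 1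
      else (ext T v + incoming T r v) / lv T r v)" if "v \<in> {0..6}" for v
    using sol that banks unfolding is_solution_iff assets_def by auto
  note eqs = lv_eq incoming_eq[OF range]
  have r0: "r 0 = u_recovery"
    using rec[of 0] donation by (auto simp: eqs ext0 u_recovery_def)
  have r3: "r 3 = 1"
    using rec[of 3] range[of 0] by (simp add: eqs ext3)
  have r4: "r 4 = 1 - u_recovery"
    using rec[of 4] r0 r3 by (simp add: eqs ext4 u_recovery_def)
  have r5: "r 5 = 1"
    using rec[of 5] range[of 4] by (simp add: eqs ext5)
  have r126: "r v = 1" if "v \<in> {1, 2, 6}" for v
    using that rec[of v] range ext_nonneg by (auto simp: eqs)
  have "r v = clearing_vector v" if "v \<in> {0..6}" for v
    using that r0 r3 r4 r5 r126 by (cases rule: bank_0_6_cases) (auto simp: clearing_vector_def)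
  moreover have "r v = clearing_vector v" if "v \<notin> {0..6}" for v
    using sol that banks unfolding is_solution_def by (auto simp: clearing_vector_def)
  ultimately show ?thesis by blast
qed

lemma clearing_vector_is_solution: "is_solution T clearing_vector"
proof -
  have range: "0 \<le> clearing_vector w" "clearing_vector w \<le> 1" for w
    by (auto simp: clearing_vector_def u_recovery_def)
  have funded: "u_recovery = 1 \<and> e \<ge> 1 \<or> u_recovery = 0 \<and> e = 0"
    using donation by (auto simp: u_recovery_def)
  have fixpoint: "clearing_vector v = (if lv T clearing_vector v \<le> assets T clearing_vector v
      then 1 else assets T clearing_vector v / lv T clearing_vector v)" if "v \<in> {0..6}" for v
    using that
    by (cases rule: bank_0_6_cases; simp add: lv_eq incoming_eq[OF range] assets_def
        ext0 ext3 ext4 ext5 ext_nonneg clearing_vector_def; insert funded ext_nonneg; auto)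
  moreover have "clearing_vector v = 0" if "v \<notin> {0..6}" for v
    using that by (simp add: clearing_vector_def)
  ultimately show ?thesis
    unfolding is_solution_iff banks using range by blast
qed

lemma unique_solution: "\<exists>!r. is_solution T r"
  using clearing_vector_is_solution clearing_vector_unique by blast

lemma the_solution: "(THE r. is_solution T r) = clearing_vector"
  using clearing_vector_is_solution clearing_vector_unique by blast

lemma incoming_players:
  "v \<in> {1, 2} \<Longrightarrow> incoming T clearing_vector v = (if e \<ge> 1 then 3 else 0)"
  by (auto simp: incoming_eq clearing_vector_def u_recovery_def)

end

lemma chicken_variant_game_sys:
  "chicken_variant (game_sys chicken_system 0 1 2 s1 s2) (donated s1 + donated s2)"
  by (cases s1; cases s2)
    (auto simp: chicken_variant_def game_sys_def donate_def chicken_system_def donated_def)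

lemma unique_solution_game_sys: "\<exists>!r. is_solution (game_sys chicken_system 0 1 2 s1 s2) r"
  using chicken_variant.unique_solution[OF chicken_variant_game_sys] .

lemma game_payoff_chicken_system:
  "game_payoff chicken_system 0 1 2 s1 s2 =
     (let gain = if s1 = C \<or> s2 = C then 3 else 0 in (gain - donated s1, gain - donated s2))"
proof -
  interpret chicken_variant "game_sys chicken_system 0 1 2 s1 s2" "donated s1 + donated s2"
    by (rule chicken_variant_game_sys)
  have "(1 \<le> donated s1 + donated s2) \<longleftrightarrow> s1 = C \<or> s2 = C"
    by (auto simp: donated_def)
  then show ?thesis
    unfolding game_payoff_def Let_def the_solution using incoming_players by simp
qed

theorem mainTheorem12:
  shows "\<exists>S u v1 v2.
    wf_system S \<and> base_model S \<and>
    u \<in> banks S \<and> v1 \<in> banks S \<and> v2 \<in> banks S \<and>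
    u \<noteq> v1 \<and> u \<noteq> v2 \<and> v1 \<noteq> v2 \<and>
    ext S v1 \<ge> 1 \<and> ext S v2 \<ge> 1 \<and>
    (\<forall>k\<in>contracts S. debtor k \<noteq> v1 \<and> debtor k \<noteq> v2) \<and>
    (\<forall>s1 s2. \<exists>!r. is_solution (game_sys S u v1 v2 s1 s2) r) \<and>
    game_payoff S u v1 v2 C C = (2, 2) \<and>
    game_payoff S u v1 v2 D D = (0, 0) \<and>
    game_payoff S u v1 v2 C D = (2, 3) \<and>
    game_payoff S u v1 v2 D C = (3, 2) \<and>
    {(s1, s2). pure_nash (game_payoff S u v1 v2) s1 s2} = {(C, D), (D, C)}"
proof -
  have payoffs: "game_payoff chicken_system 0 1 2 C C = (2, 2)"
    "game_payoff chicken_system 0 1 2 D D = (0, 0)"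
    "game_payoff chicken_system 0 1 2 C D = (2, 3)"
    "game_payoff chicken_system 0 1 2 D C = (3, 2)"
    unfolding game_payoff_chicken_system by (simp_all add: donated_def)
  show ?thesis
  proof (intro exI conjI)
    show "{(s1, s2). pure_nash (game_payoff chicken_system 0 1 2) s1 s2} = {(C, D), (D, C)}"
      using pure_nash_chicken_game payoffs by blast
  qed (use wf_chicken_system unique_solution_game_sys payoffs in
      \<open>auto simp: chicken_system_def base_model_def chicken_contracts_def\<close>)
qed

end
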